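(* There exists an LCL problem $\Pi$ on undirected paths (without inputs) that can be solved in $O(\log^* n)$ rounds in the LOCAL model, but whose mending requires distance $\Theta(n)$: $\Pi$ is not $T$-mendable for any function $T$ with $T(n)=o(n)$.
   Context: A locally verifiable problem $\Pi$ on a graph family $\mathcal{G}$ is given by a set $\Gamma$ of output labels (here no inputs) and a verifier $\psi$ with verification radius $r\in\mathbb{N}$: for $G=(V,E)\in\mathcal{G}$, an output labeling $\lambda:V\to\Gamma$ and a node $v$, $\psi(G,\lambda,v)\in\{\text{happy},\text{unhappy}\}$ depends only on the radius-$r$ neighborhood of $v$ (structure and outputs, up to isomorphism). $\lambda$ is a solution if $\psi$ is happy at every node. $\Pi$ is an LCL problem if $\Gamma$ is finite and degrees are bounded by a constant. Partial labelings are maps $\lambda:V\to\Gamma\cup\{\bot\}$; the relaxed verifier $\psi^*$ is happy at $v$ if some node within distance $r$ of $v$ has label $\bot$, and otherwise $\psi^*(G,\lambda,v)=\psi(G,\lambda',v)$ for any $\lambda':V\to\Gamma$ agreeing with $\lambda$ on the radius-$r$ neighborhood of $v$; $\psi^*$ accepts $\lambda$ if it is happy at all nodes. Given $\lambda$ accepted by $\psi^*$ and a node $v$, a $t$-mend of $\lambda$ at $v$ is a partial labeling $\mu$ such that $\psi^*$ accepts $\mu$, $\mu(v)\neq\bot$, $\mu(u)=\bot$ implies $\lambda(u)=\bot$, and $\mu(u)\neq\lambda(u)$ implies $u$ is within distance $t$ of $v$. A verifier $\psi$ is $T$-mendable if for every $G\in\mathcal{G}$ with $n$ nodes, every $\lambda$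 accepted by $\psi^*$ and every node $v$, a $T(n)$-mend of $\lambda$ at $v$ exists; $\Pi$ is $T$-mendable if some radius-$r$ verifier for $\Pi$ (accepting exactly the solutions of $\Pi$) is $T$-mendable. LOCAL model: nodes are processors with unique identifiers communicating along edges in synchronous rounds with unbounded message size; a problem is solvable in $T(n)$ rounds if after $T(n)$ rounds all nodes output labels forming a valid solution. *)

theory Defs
  imports Complex_Main "HOL-Library.Landau_Symbols"
begin

text \<open>Undirected paths: the path with n nodes has node set {0..<n} and edges {i, i+1}.
  A radius-r view of a node v consists of the labels of the nodes at distance 1..r on
  one side (closest first), the label of v, and the labels on the other side.
  Since paths are undirected, functions of views must be invariant under swapping sides
  (isomorphism = reflection).\<close>

definition lview :: "nat \<Rightarrow> (nat \<Rightarrow> 'a) \<Rightarrow> nat \<Rightarrow> 'a list" where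
  "lview r f v = map (\<lambda>j. f (v - Suc j)) [0..<min r v]"

definition rview :: "nat \<Rightarrow> nat \<Rightarrow> (nat \<Rightarrow> 'a) \<Rightarrow> nat \<Rightarrow> 'a list" where
  "rview n r f v = map (\<lambda>j. f (v + Suc j)) [0..<min r (n - Suc v)]"

definition sym_view :: "('a list \<Rightarrow> 'a \<Rightarrow> 'a list \<Rightarrow> 'b) \<Rightarrow> bool" where
  "sym_view f \<longleftrightarrow> (\<forall>L x R. f L x R = f R x L)"

definition pdist :: "nat \<Rightarrow> nat \<Rightarrow> nat" where
  "pdist u v = (if u \<le> v then v - u else u - v)"

definition happy :: "nat \<Rightarrow> nat \<Rightarrow> (nat list \<Rightarrow> nat \<Rightarrow> nat list \<Rightarrow> bool) \<Rightarrow> (nat \<Rightarrow> nat) \<Rightarrow> nat \<Rightarrow> bool" where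
  "happy n r \<psi> lam v = \<psi> (lview r lam v) (lam v) (rview n r lam v)"

definition is_solution :: "nat set \<Rightarrow> nat \<Rightarrow> nat \<Rightarrow> (nat list \<Rightarrow> nat \<Rightarrow> nat list \<Rightarrow> bool) \<Rightarrow> (nat \<Rightarrow> nat) \<Rightarrow> bool" where
  "is_solution \<Gamma> n r \<psi> lam \<longleftrightarrow> (\<forall>v<n. lam v \<in> \<Gamma>) \<and> (\<forall>v<n. happy n r \<psi> lam v)"

definition verifier_for :: "nat set \<Rightarrow> nat \<Rightarrow> (nat list \<Rightarrow> nat \<Rightarrow> nat list \<Rightarrow> bool)
    \<Rightarrow> nat \<Rightarrow> (nat list \<Rightarrow> nat \<Rightarrow> nat list \<Rightarrow> bool) \<Rightarrow> bool" where
  "verifier_for \<Gamma> r \<psi> r0 \<psi>0 \<longleftrightarrow> sym_view \<psi> \<and>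
     (\<forall>n lam. is_solution \<Gamma> n r \<psi> lam \<longleftrightarrow> is_solution \<Gamma> n r0 \<psi>0 lam)"

text \<open>Partial labelings: None plays the role of bottom.\<close>

definition partial_labeling :: "nat set \<Rightarrow> nat \<Rightarrow> (nat \<Rightarrow> nat option) \<Rightarrow> bool" where
  "partial_labeling \<Gamma> n \<mu> \<longleftrightarrow> (\<forall>u<n. \<forall>x. \<mu> u = Some x \<longrightarrow> x \<in> \<Gamma>)"

definition relaxed_happy :: "nat \<Rightarrow> nat \<Rightarrow> (nat list \<Rightarrow> nat \<Rightarrow> nat list \<Rightarrow> bool) \<Rightarrow> (nat \<Rightarrow> nat option) \<Rightarrow> nat \<Rightarrow> bool" where
  "relaxed_happy n r \<psi> \<mu> v \<longleftrightarrow>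
     (\<exists>u<n. pdist u v \<le> r \<and> \<mu> u = None) \<or> happy n r \<psi> (\<lambda>u. the (\<mu> u)) v"

definition relaxed_accepts :: "nat \<Rightarrow> nat \<Rightarrow> (nat list \<Rightarrow> nat \<Rightarrow> nat list \<Rightarrow> bool) \<Rightarrow> (nat \<Rightarrow> nat option) \<Rightarrow> bool" where
  "relaxed_accepts n r \<psi> \<mu> \<longleftrightarrow> (\<forall>v<n. relaxed_happy n r \<psi> \<mu> v)"

definition is_mend :: "nat set \<Rightarrow> nat \<Rightarrow> nat \<Rightarrow> (nat list \<Rightarrow> nat \<Rightarrow> nat list \<Rightarrow> bool)
    \<Rightarrow> (nat \<Rightarrow> nat option) \<Rightarrow> nat \<Rightarrow> real \<Rightarrow> (nat \<Rightarrow> nat option) \<Rightarrow> bool" where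
  "is_mend \<Gamma> n r \<psi> lam v t \<mu> \<longleftrightarrow>
     partial_labeling \<Gamma> n \<mu> \<and> relaxed_accepts n r \<psi> \<mu> \<and> \<mu> v \<noteq> None \<and>
     (\<forall>u<n. \<mu> u = None \<longrightarrow> lam u = None) \<and>
     (\<forall>u<n. \<mu> u \<noteq> lam u \<longrightarrow> real (pdist u v) \<le> t)"

definition mendable_verifier :: "nat set \<Rightarrow> nat \<Rightarrow> (nat list \<Rightarrow> nat \<Rightarrow> nat list \<Rightarrow> bool) \<Rightarrow> (nat \<Rightarrow> real) \<Rightarrow> bool" where
  "mendable_verifier \<Gamma> r \<psi> T \<longleftrightarrow>
     (\<forall>n lam v. partial_labeling \<Gamma> n lam \<and> relaxed_accepts n r \<psi> lam \<and> v < n \<longrightarrow>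
        (\<exists>\<mu>. is_mend \<Gamma> n r \<psi> lam v (T n) \<mu>))"

definition mendable_problem :: "nat set \<Rightarrow> nat \<Rightarrow> (nat list \<Rightarrow> nat \<Rightarrow> nat list \<Rightarrow> bool) \<Rightarrow> (nat \<Rightarrow> real) \<Rightarrow> bool" where
  "mendable_problem \<Gamma> r0 \<psi>0 T \<longleftrightarrow>
     (\<exists>r \<psi>. verifier_for \<Gamma> r \<psi> r0 \<psi>0 \<and> mendable_verifier \<Gamma> r \<psi> T)"

text \<open>LOCAL model on paths. Identifiers are injective into {1..n^c}. A t-round algorithm
  is a function of n and the radius-t view of identifiers (invariant under reflection).\<close>

definition valid_ids :: "nat \<Rightarrow> nat \<Rightarrow> (nat \<Rightarrow> nat) \<Rightarrow> bool" where
  "valid_ids c n ids \<longleftrightarrow> inj_on ids {..<n} \<and> (\<forall>v<n. ids v \<in> {1..n ^ c})"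

definition local_output :: "(nat \<Rightarrow> nat list \<Rightarrow> nat \<Rightarrow> nat list \<Rightarrow> nat) \<Rightarrow> nat \<Rightarrow> nat \<Rightarrow> (nat \<Rightarrow> nat) \<Rightarrow> nat \<Rightarrow> nat" where
  "local_output A n t ids v = A n (lview t ids v) (ids v) (rview n t ids v)"

definition solves_local :: "nat set \<Rightarrow> nat \<Rightarrow> (nat list \<Rightarrow> nat \<Rightarrow> nat list \<Rightarrow> bool) \<Rightarrow> nat
    \<Rightarrow> (nat \<Rightarrow> nat list \<Rightarrow> nat \<Rightarrow> nat list \<Rightarrow> nat) \<Rightarrow> (nat \<Rightarrow> nat) \<Rightarrow> bool" where
  "solves_local \<Gamma> r0 \<psi>0 c A T \<longleftrightarrow> (\<forall>n. sym_view (A n)) \<and>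
     (\<forall>n ids. valid_ids c n ids \<longrightarrow> is_solution \<Gamma> n r0 \<psi>0 (local_output A n (T n) ids))"

definition log_star :: "nat \<Rightarrow> nat" where
  "log_star n = (LEAST k. ((\<lambda>x. log 2 x) ^^ k) (real n) \<le> 1)"

end

theory Submission
  imports Defs
begin

text \<open>The witness is the problem in which either every node outputs the blank label 2 or
  the labels form a proper 2-colouring with 0 and 1; a non-blank node forces its neighbours
  to be non-blank, so a solution is all blank or alternating. Zero rounds suffice to solve
  it (everybody outputs blank). For mending, take the partial labeling with a single hole
  at the middle node v whose two halves are 2-colourings of opposite phase. Every radius-r
  view avoiding the hole looks like a view of a genuine alternating solution, so any
  verifier for the problem accepts it. A mend at v fills the hole, hence is a complete
  solution; if it changes nothing within distance about n/2 of v, it keeps both endpoints,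
  and no alternating labeling extends both phases.\<close>

definition blank_or_2coloring :: "nat list \<Rightarrow> nat \<Rightarrow> nat list \<Rightarrow> bool" where
  "blank_or_2coloring L x R \<longleftrightarrow>
     (\<forall>y \<in> set L \<union> set R. (x = 2 \<longleftrightarrow> y = 2) \<and> (x \<noteq> 2 \<longrightarrow> y \<noteq> x))"

lemma sym_view_blank_or_2coloring: "sym_view blank_or_2coloring"
  unfolding sym_view_def blank_or_2coloring_def by blast

lemma happy_cong:
  assumes agree: "\<And>u. u < n \<Longrightarrow> pdist u w \<le> r \<Longrightarrow> f u = g u"
    and "w < n"
  shows "happy n r \<psi> f w = happy n r \<psi> g w"
proof -
  have "lview r f w = lview r g w"
    unfolding lview_def
  proof (rule map_cong[OF refl])
    fix j assume "j \<in> set [0..<min r w]"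
    then show "f (w - Suc j) = g (w - Suc j)"
      using \<open>w < n\<close> by (intro agree) (auto simp: pdist_def)
  qed
  moreover have "rview n r f w = rview n r g w"
    unfolding rview_def
  proof (rule map_cong[OF refl])
    fix j assume "j \<in> set [0..<min r (n - Suc w)]"
    then show "f (w + Suc j) = g (w + Suc j)"
      by (intro agree) (auto simp: pdist_def)
  qed
  moreover have "f w = g w"
    using agree \<open>w < n\<close> by (simp add: pdist_def)
  ultimately show ?thesis
    unfolding happy_def by simp
qed

text \<open>Views within distance r of the hole v see it; every other view lies entirely on
  one side of v.\<close>

lemma relaxed_accepts_glue:
  assumes f: "is_solution \<Gamma> n r \<psi> f" and g: "is_solution \<Gamma> n r \<psi> g" and "v < n"
  shows "relaxed_accepts n r \<psi>
           (\<lambda>u. if u < v then Some (f u) else if u = v then None else Some (g u))"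
    (is "relaxed_accepts n r \<psi> ?lam")
  unfolding relaxed_accepts_def relaxed_happy_def
proof (intro allI impI)
  fix w assume "w < n"
  show "(\<exists>u<n. pdist u w \<le> r \<and> ?lam u = None) \<or> happy n r \<psi> (\<lambda>u. the (?lam u)) w"
  proof (cases "pdist v w \<le> r")
    case True
    then show ?thesis
      using \<open>v < n\<close> by auto
  next
    case far: False
    show ?thesis
    proof (cases "w < v")
      case True
      have "happy n r \<psi> (\<lambda>u. the (?lam u)) w = happy n r \<psi> f w"
        using far True by (intro happy_cong \<open>w < n\<close>) (auto simp: pdist_def split: if_splits)
      then show ?thesis
        using f \<open>w < n\<close> unfolding is_solution_def by simp
    next
      case False
      have "happy n r \<psi> (\<lambda>u. the (?lam u)) w = happy n r \<psi> g w"
        using far False by (intro happy_cong \<open>w < n\<close>) (auto simp: pdist_def split: if_splits)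
      then show ?thesis
        using g \<open>w < n\<close> unfolding is_solution_def by simp
    qed
  qed
qed

lemma is_mend_single_hole_is_solution:
  assumes mend: "is_mend \<Gamma> n r \<psi> lam v t \<mu>"
    and hole: "\<And>u. u < n \<Longrightarrow> lam u = None \<Longrightarrow> u = v"
  shows "is_solution \<Gamma> n r \<psi> (\<lambda>u. the (\<mu> u))"
proof -
  from mend have labels: "partial_labeling \<Gamma> n \<mu>" and accepts: "relaxed_accepts n r \<psi> \<mu>"
    and "\<mu> v \<noteq> None" and holes: "\<forall>u<n. \<mu> u = None \<longrightarrow> lam u = None"
    unfolding is_mend_def by blast+
  have total: "\<mu> u \<noteq> None" if "u < n" for u
    using holes hole[OF that] that \<open>\<mu> v \<noteq> None\<close> by metis
  show ?thesis
    unfolding is_solution_def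
  proof (intro conjI allI impI)
    fix u assume "u < n"
    then obtain x where "\<mu> u = Some x"
      using total by blast
    then show "the (\<mu> u) \<in> \<Gamma>"
      using labels \<open>u < n\<close> unfolding partial_labeling_def by simp
  next
    fix u assume "u < n"
    then have "relaxed_happy n r \<psi> \<mu> u"
      using accepts unfolding relaxed_accepts_def by blast
    then show "happy n r \<psi> (\<lambda>u. the (\<mu> u)) u"
      using total unfolding relaxed_happy_def by blast
  qed
qed

lemma lview_Suc_0: "lview (Suc 0) f v = (if v = 0 then [] else [f (v - 1)])"
  unfolding lview_def by (cases v) auto

lemma rview_Suc_0: "rview n (Suc 0) f v = (if Suc v < n then [f (Suc v)] else [])"
  unfolding rview_def by (cases "n - Suc v") auto

lemma is_solution_blank: "is_solution {0, 1, 2} n 1 blank_or_2coloring (\<lambda>_. 2)"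
  unfolding is_solution_def happy_def blank_or_2coloring_def by (simp add: lview_Suc_0 rview_Suc_0)

lemma is_solution_alternating:
  "is_solution {0, 1, 2} n 1 blank_or_2coloring (\<lambda>u. (u + k) mod 2)"
proof -
  have flip: "(Suc u + k) mod 2 \<noteq> (u + k) mod 2" for u
    by presburger
  have "happy n 1 blank_or_2coloring (\<lambda>u. (u + k) mod 2) v" for v
    using flip[of v] flip[of "v - 1"]
    by (cases v) (auto simp: happy_def blank_or_2coloring_def lview_Suc_0 rview_Suc_0)
  then show ?thesis
    unfolding is_solution_def by auto
qed

lemma solution_step:
  assumes "is_solution {0, 1, 2} n 1 blank_or_2coloring g" "Suc w < n" "g w \<noteq> 2"
  shows "g (Suc w) \<noteq> 2" "g (Suc w) \<noteq> g w"
proof -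
  have "happy n 1 blank_or_2coloring g w"
    using assms(1,2) unfolding is_solution_def by simp
  moreover have "rview n 1 g w = [g (Suc w)]"
    using assms(2) by (simp add: rview_Suc_0)
  ultimately show "g (Suc w) \<noteq> 2" "g (Suc w) \<noteq> g w"
    using assms(3) unfolding happy_def blank_or_2coloring_def by auto
qed

lemma solution_alternates:
  assumes sol: "is_solution {0, 1, 2} n 1 blank_or_2coloring g" and "g 0 = 0" and "w < n"
  shows "g w = w mod 2"
  using \<open>w < n\<close>
proof (induction w)
  case 0
  then show ?case
    using \<open>g 0 = 0\<close> by simp
next
  case (Suc w)
  then have "g w = w mod 2"
    by simp
  moreover have "g (Suc w) \<in> {0, 1, 2}"
    using sol Suc.prems unfolding is_solution_def by blast
  ultimately show ?case
    using solution_step[OF sol Suc.prems] by (auto simp: mod_Suc)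
qed

lemma not_mendable_verifier:
  assumes ver: "verifier_for {0, 1, 2} r \<psi> 1 blank_or_2coloring"
    and "3 \<le> n" and short: "T n < real (n - 1 - n div 2)"
  shows "\<not> mendable_verifier {0, 1, 2} r \<psi> T"
proof
  assume "mendable_verifier {0, 1, 2} r \<psi> T"
  have same_solutions:
    "is_solution {0, 1, 2} n r \<psi> g \<longleftrightarrow> is_solution {0, 1, 2} n 1 blank_or_2coloring g" for g
    using ver unfolding verifier_for_def by blast
  define v where "v = n div 2"
  have "0 < v" "v < n - 1" "v < n"
    using \<open>3 \<le> n\<close> unfolding v_def by auto
  define lam where "lam = (\<lambda>u. if u < v then Some (u mod 2) else if u = v then None
                              else Some ((u + 1) mod 2))"
  have "partial_labeling {0, 1, 2} n lam"
    unfolding partial_labeling_def lam_def by auto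
  moreover have "relaxed_accepts n r \<psi> lam"
  proof -
    have alternating: "is_solution {0, 1, 2} n r \<psi> (\<lambda>u. (u + k) mod 2)" for k
      using is_solution_alternating same_solutions by blast
    have "is_solution {0, 1, 2} n r \<psi> (\<lambda>u. u mod 2)"
      using alternating[of 0] by simp
    from relaxed_accepts_glue[OF this alternating[of 1] \<open>v < n\<close>]
    show ?thesis
      unfolding lam_def .
  qed
  ultimately obtain \<mu> where mend: "is_mend {0, 1, 2} n r \<psi> lam v (T n) \<mu>"
    using \<open>mendable_verifier {0, 1, 2} r \<psi> T\<close> \<open>v < n\<close>
    unfolding mendable_verifier_def by blast
  define g where "g u = the (\<mu> u)" for u
  have "lam u = None \<Longrightarrow> u = v" for u
    unfolding lam_def by (simp split: if_splits)
  then have g_solution: "is_solution {0, 1, 2} n 1 blank_or_2coloring g"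
    using is_mend_single_hole_is_solution[OF mend] same_solutions unfolding g_def by blast
  have unchanged: "\<mu> u = lam u" if "u < n" "T n < real (pdist u v)" for u
    using mend that unfolding is_mend_def by fastforce
  have "g 0 = 0"
    using unchanged[of 0] short \<open>0 < v\<close> \<open>v < n - 1\<close>
    unfolding g_def lam_def v_def pdist_def by auto
  moreover have "g (n - 1) = n mod 2"
    using unchanged[of "n - 1"] short \<open>v < n - 1\<close>
    unfolding g_def lam_def v_def pdist_def by auto
  ultimately have "n mod 2 = (n - 1) mod 2"
    using solution_alternates[OF g_solution] \<open>3 \<le> n\<close> by auto
  then show False
    using \<open>3 \<le> n\<close> by (cases n) (auto simp: mod_Suc split: if_splits)
qed

lemma smallo_linear_below_half:
  fixes T :: "nat \<Rightarrow> real"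
  assumes "T \<in> o(\<lambda>n. real n)"
  obtains n where "3 \<le> n" "T n < real (n - 1 - n div 2)"
proof -
  obtain N where N: "\<And>n. N \<le> n \<Longrightarrow> norm (T n) \<le> 1 / 8 * norm (real n)"
    using landau_o.smallD[OF assms, of "1 / 8"] unfolding eventually_at_top_linorder by auto
  define n where "n = max N 8"
  have "T n \<le> real n / 8"
    using N[of n] unfolding n_def by auto
  moreover have "real n / 2 - 1 \<le> real (n - 1 - n div 2)" "8 \<le> n"
    unfolding n_def by linarith+
  ultimately show thesis
    by (intro that[of n]) auto
qed

theorem theorem7p1:
  shows "\<exists>(\<Gamma>::nat set) (r0::nat) \<psi>0. finite \<Gamma> \<and> sym_view \<psi>0 \<and>
    (\<forall>c::nat. c \<ge> 1 \<longrightarrow> (\<exists>(T::nat \<Rightarrow> nat) A.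
        (\<lambda>n. real (T n)) \<in> O(\<lambda>n. real (log_star n)) \<and> solves_local \<Gamma> r0 \<psi>0 c A T)) \<and>
    (\<forall>T::nat \<Rightarrow> real. T \<in> o(\<lambda>n. real n) \<longrightarrow> \<not> mendable_problem \<Gamma> r0 \<psi>0 T)"
proof (intro exI[of _ "{0, 1, 2}"] exI[of _ 1] exI[of _ blank_or_2coloring] conjI allI impI)
  show "finite {0 :: nat, 1, 2}" "sym_view blank_or_2coloring"
    by (simp_all add: sym_view_blank_or_2coloring)
next
  fix c :: nat
  have "solves_local {0, 1, 2} 1 blank_or_2coloring c (\<lambda>_ _ _ _. 2) (\<lambda>_. 0)"
    unfolding solves_local_def local_output_def sym_view_def using is_solution_blank by simp
  then show "\<exists>(T::nat \<Rightarrow> nat) A. (\<lambda>n. real (T n)) \<in> O(\<lambda>n. real (log_star n)) \<and>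
      solves_local {0, 1, 2} 1 blank_or_2coloring c A T"
    by (intro exI[of _ "\<lambda>_. 0"] exI[of _ "\<lambda>_ _ _ _. 2"]) simp
next
  fix T :: "nat \<Rightarrow> real"
  assume "T \<in> o(\<lambda>n. real n)"
  then obtain n where "3 \<le> n" "T n < real (n - 1 - n div 2)"
    by (rule smallo_linear_below_half)
  then show "\<not> mendable_problem {0, 1, 2} 1 blank_or_2coloring T"
    unfolding mendable_problem_def using not_mendable_verifier by blast
qed

end
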